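(* Consider the problem $\min_{x\in\mathbb{R}^n}\Phi(x)$, $\Phi=\Psi+\mathcal{X}$, $\Psi=f+h$, where $f$ is differentiable with $L_f$-Lipschitz gradient (possibly nonconvex), $h$ is convex and differentiable with $L_h$-Lipschitz gradient, $L_\Psi=L_f+L_h>0$, and $\mathcal{X}$ is a proper closed convex function with bounded domain. Let $\mathcal{P}(x,y,c):=\operatorname{argmin}_u\{\langle y,u\rangle+\frac{1}{2c}\|u-x\|^2+\mathcal{X}(u)\}$ and $\mathcal{G}(x,y,c):=\frac1c[x-\mathcal{P}(x,y,c)]$, and assume there is $M$ with $\|\mathcal{P}(x,y,c)\|\le M$ for all $c>0$, $x,y$. Run the composite AG method from $x_0$ ($x^{ag}_0=x_0$): for $k\ge1$, $$x^{md}_k=(1-\alpha_k)x^{ag}_{k-1}+\alpha_kx_{k-1},\quad x_k=\mathcal{P}(x_{k-1},\nabla\Psi(x^{md}_k),\lambda_k),\quad x^{ag}_k=\mathcal{P}(x^{md}_k,\nabla\Psi(x^{md}_k),\beta_k),$$ with $\alpha_k=\frac{2}{k+1}$, $\beta_k=\frac{1}{2L_\Psi}$, $\lambda_k=\frac{k\beta_k}{2}$. Assume an optimal solution $x^*$ of $\min\Phi$ exists. Then for any $N\ge1$, $$\min_{k=1,\ldots,N}\|\mathcal{G}(x^{md}_k,\nabla\Psi(x^{md}_k),\beta_k)\|^2\le24L_\Psi\Big[\frac{4L_\Psi\|x_0-x^*\|^2}{N^2(N+1)}+\frac{L_f}{N}(\|x^*\|^2+2M^2)\Big].$$ If in addition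 $L_f=0$, then $\Phi(x^{ag}_N)-\Phi(x^* )\le\frac{4L_\Psi\|x_0-x^*\|^2}{N(N+1)}$.
   Context: $\|\cdot\|$ is the Euclidean norm. *)

theory Defs
  imports "HOL-Analysis.Analysis" "HOL-Library.Extended_Real"
begin

text \<open>Extended-real valued functions (value \<infinity> outside the effective domain).\<close>

definition proper_fn :: "('a \<Rightarrow> ereal) \<Rightarrow> bool" where
  "proper_fn X \<longleftrightarrow> (\<forall>x. X x \<noteq> -\<infinity>) \<and> (\<exists>x. X x \<noteq> \<infinity>)"

definition convex_fn :: "('a::real_vector \<Rightarrow> ereal) \<Rightarrow> bool" where
  "convex_fn X \<longleftrightarrow> (\<forall>x y t. 0 < t \<and> t < 1 \<longrightarrow>
      X ((1 - t) *\<^sub>R x + t *\<^sub>R y) \<le> ereal (1 - t) * X x + ereal t * X y)"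

definition closed_fn :: "('a::topological_space \<Rightarrow> ereal) \<Rightarrow> bool" where
  "closed_fn X \<longleftrightarrow> closed {(x, r::real). X x \<le> ereal r}"

definition dom_fn :: "('a \<Rightarrow> ereal) \<Rightarrow> 'a set" where
  "dom_fn X = {x. X x \<noteq> \<infinity>}"

definition prox_map :: "('a::real_inner \<Rightarrow> ereal) \<Rightarrow> 'a \<Rightarrow> 'a \<Rightarrow> real \<Rightarrow> 'a" where
  "prox_map X x y c = (SOME u. \<forall>v.
      ereal (inner y u + (norm (u - x))\<^sup>2 / (2 * c)) + X u
        \<le> ereal (inner y v + (norm (v - x))\<^sup>2 / (2 * c)) + X v)"

definition grad_map :: "('a::real_inner \<Rightarrow> ereal) \<Rightarrow> 'a \<Rightarrow> 'a \<Rightarrow> real \<Rightarrow> 'a" where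
  "grad_map X x y c = (1 / c) *\<^sub>R (x - prox_map X x y c)"

end

theory Submission
  imports Defs
begin

(* Each iteration of the composite AG method combines the descent lemma for \<Psi> at the point
   xmd k, the three-point property of the prox map (minimality plus convexity of X) at xag k and
   at xs k, and convexity of X along the segment from xag (k - 1) to xs k.  Multiplied by the
   weight k (k + 1) / 2, the resulting one-step inequality telescopes in the potential
   k (k + 1) / 2 \<cdot> (\<Phi> (xag k) - \<Phi> xstar) + 2 L \<parallel>xs k - xstar\<parallel>\<^sup>2; the nonconvexity of f only costs
   errors of size L_f k (\<parallel>xstar\<parallel>\<^sup>2 + M\<^sup>2), because all iterates stay in the ball of radius M.  Every
   step also releases (L/2) \<parallel>xag k - xmd k\<parallel>\<^sup>2, which is the squared gradient mapping divided by
   8 L, so the weighted sum of squared gradient mappings is bounded and the minimum is at most this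
   bound divided by the sum of the weights, N (N + 1) (N + 2) / 6.  For L_f = 0 the error terms
   vanish and the potential bound is the O(1/N\<^sup>2) rate for the objective gap. *)

lemma nonneg_if_nonneg_add_small_multiple:
  fixes A B :: real
  assumes "\<And>t. 0 < t \<Longrightarrow> t < 1 \<Longrightarrow> 0 \<le> A + t * B"
  shows "0 \<le> A"
proof (rule tendsto_lowerbound)
  show "((\<lambda>t. A + t * B) \<longlongrightarrow> A) (at_right 0)"
    by (auto intro!: tendsto_eq_intros)
  show "\<forall>\<^sub>F t in at_right 0. 0 \<le> A + t * B"
    using eventually_at_right_real[OF zero_less_one] by eventually_elim (use assms in auto)
qed simp

lemma proper_fn_finite:
  assumes "proper_fn X" "X v \<noteq> \<infinity>"
  shows "X v = ereal (real_of_ereal (X v))"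
  using assms unfolding proper_fn_def by (cases "X v") auto

lemma closed_fn_sublevel_plus_continuous:
  fixes X :: "'a::topological_space \<Rightarrow> ereal" and g :: "'a \<Rightarrow> real"
  assumes "closed_fn X" and "continuous_on UNIV g"
  shows "closed {u. X u \<le> ereal (r - g u)}"
proof -
  have "closed ((\<lambda>u. (u, r - g u)) -` {(x, r::real). X x \<le> ereal r})"
    using assms unfolding closed_fn_def by (intro closed_vimage continuous_intros)
  moreover have "(\<lambda>u. (u, r - g u)) -` {(x, r::real). X x \<le> ereal r} = {u. X u \<le> ereal (r - g u)}"
    by auto
  ultimately show ?thesis by simp
qed

lemma continuous_plus_closed_fn_has_minimizer:
  fixes X :: "'a::heine_borel \<Rightarrow> ereal" and g :: "'a \<Rightarrow> real"
  assumes X: "proper_fn X" "closed_fn X" "bounded (dom_fn X)"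
    and g: "continuous_on UNIV g"
  shows "\<exists>u. \<forall>v. ereal (g u) + X u \<le> ereal (g v) + X v"
proof -
  \<comment> \<open>The sublevel sets \<open>F r\<close> for values \<open>r\<close> above the infimum are closed and meet the compact
    set \<open>closure (dom_fn X)\<close> with the finite intersection property.\<close>
  define I where "I = {r::real. \<exists>v. ereal (g v) + X v < ereal r}"
  define F where "F r = {u. X u \<le> ereal (r - g u)}" for r
  have dom_in_closure: "v \<in> closure (dom_fn X)" if "X v \<noteq> \<infinity>" for v
    using that closure_subset[of "dom_fn X"] by (auto simp: dom_fn_def)
  have "closed (F r)" for r
    unfolding F_def using X(2) g by (rule closed_fn_sublevel_plus_continuous)
  moreover have "closure (dom_fn X) \<inter> \<Inter> (F ` I') \<noteq> {}" if "finite I'" "I' \<subseteq> I" for I'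
  proof (cases "I' = {}")
    case True
    from X(1) obtain v where "X v \<noteq> \<infinity>" unfolding proper_fn_def by auto
    then show ?thesis using True dom_in_closure by auto
  next
    case False
    then have "Min I' \<in> I" using Min_in[OF that(1)] that(2) by blast
    then obtain v where v: "ereal (g v) + X v < ereal (Min I')" unfolding I_def by auto
    have "v \<in> F r" if "r \<in> I'" for r
    proof -
      have "ereal (g v) + X v < ereal r"
        using v Min_le[OF \<open>finite I'\<close> that] by (meson ereal_less_eq(3) less_le_trans)
      then show ?thesis unfolding F_def by (cases "X v") (auto simp: algebra_simps)
    qed
    moreover have "X v \<noteq> \<infinity>" using v by auto
    ultimately show ?thesis using dom_in_closure by auto
  qed
  ultimately have "closure (dom_fn X) \<inter> \<Inter> (F ` I) \<noteq> {}"
    using compact_imp_fip_image[of "closure (dom_fn X)" I F] X(3) by (auto simp: compact_closure)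
  then obtain u where u: "\<And>r. r \<in> I \<Longrightarrow> X u \<le> ereal (r - g u)" unfolding F_def by auto
  have "ereal (g u) + X u \<le> ereal (g v) + X v" for v
  proof (cases "X v")
    case (real xv)
    show ?thesis
    proof (rule ereal_le_epsilon2)
      fix e :: real assume "0 < e"
      then have "g v + xv + e \<in> I" unfolding I_def using real by (intro CollectI exI[of _ v]) auto
      then show "ereal (g u) + X u \<le> ereal (g v) + X v + ereal e"
        using u real by (cases "X u") force+
    qed
  next
    case MInf then show ?thesis using X(1) unfolding proper_fn_def by auto
  qed simp
  then show ?thesis by blast
qed

lemma norm_add_power2:
  fixes a b :: "'a::real_inner"
  shows "(norm (a + b))\<^sup>2 = (norm a)\<^sup>2 + 2 * inner a b + (norm b)\<^sup>2"
  using dot_norm[of a b] by simp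

lemma norm_add_power2_le:
  fixes a b :: "'a::real_normed_vector"
  shows "(norm (a + b))\<^sup>2 \<le> 2 * (norm a)\<^sup>2 + 2 * (norm b)\<^sup>2"
proof -
  have "(norm (a + b))\<^sup>2 \<le> (norm a + norm b)\<^sup>2"
    using norm_triangle_ineq by (intro power_mono) auto
  also have "\<dots> \<le> 2 * (norm a)\<^sup>2 + 2 * (norm b)\<^sup>2"
    using sum_squares_bound[of "norm a" "norm b"] by (simp add: power2_sum)
  finally show ?thesis .
qed

lemma prox_map_minimizes:
  fixes X :: "'a::{real_inner,heine_borel} \<Rightarrow> ereal" and x y :: 'a and c :: real
  assumes "proper_fn X" "closed_fn X" "bounded (dom_fn X)"
  defines "p \<equiv> prox_map X x y c"
  shows "ereal (inner y p + (norm (p - x))\<^sup>2 / (2 * c)) + X p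
        \<le> ereal (inner y v + (norm (v - x))\<^sup>2 / (2 * c)) + X v"
proof -
  have "\<exists>u. \<forall>v. ereal (inner y u + (norm (u - x))\<^sup>2 / (2 * c)) + X u
        \<le> ereal (inner y v + (norm (v - x))\<^sup>2 / (2 * c)) + X v"
    using assms(1-3) unfolding divide_inverse
    by (intro continuous_plus_closed_fn_has_minimizer) (auto intro!: continuous_intros)
  from someI_ex[OF this] show ?thesis unfolding p_def prox_map_def by blast
qed

lemma prox_map_in_dom:
  fixes X :: "'a::{real_inner,heine_borel} \<Rightarrow> ereal"
  assumes "proper_fn X" "closed_fn X" "bounded (dom_fn X)"
  shows "X (prox_map X x y c) \<noteq> \<infinity>"
proof -
  from assms(1) obtain u where "X u \<noteq> \<infinity>" unfolding proper_fn_def by auto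
  then show ?thesis
    using prox_map_minimizes[OF assms, of y x c u] by auto
qed

lemma prox_map_three_point:
  fixes X :: "'a::{real_inner,heine_borel} \<Rightarrow> ereal" and x y u :: 'a and c :: real
  assumes X: "proper_fn X" "closed_fn X" "bounded (dom_fn X)" "convex_fn X"
    and c: "c > 0" and u: "X u \<noteq> \<infinity>"
  defines "p \<equiv> prox_map X x y c"
  shows "inner y p + real_of_ereal (X p) + (norm (p - x))\<^sup>2 / (2 * c) + (norm (u - p))\<^sup>2 / (2 * c)
        \<le> inner y u + real_of_ereal (X u) + (norm (u - x))\<^sup>2 / (2 * c)"
proof -
  define q where "q v = inner y v + (norm (v - x))\<^sup>2 / (2 * c)" for v
  define d where "d = u - p"
  define A where "A = inner y d + inner (p - x) d / c"
  define B where "B = (norm d)\<^sup>2 / (2 * c)"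
  obtain xu xp where xu: "X u = ereal xu" and xp: "X p = ereal xp"
    using proper_fn_finite[OF X(1) u] proper_fn_finite[OF X(1) prox_map_in_dom[OF X(1-3)]]
    unfolding p_def by blast
  have q_line: "q (p + t *\<^sub>R d) = q p + t * A + t\<^sup>2 * B" for t
  proof -
    have "(norm (p + t *\<^sub>R d - x))\<^sup>2 = (norm (p - x))\<^sup>2 + 2 * t * inner (p - x) d + t\<^sup>2 * (norm d)\<^sup>2"
      using norm_add_power2[of "p - x" "t *\<^sub>R d"] by (simp add: algebra_simps power_mult_distrib)
    then show ?thesis
      unfolding q_def A_def B_def using c by (simp add: inner_add_right field_simps)
  qed
  \<comment> \<open>Compare \<open>p\<close> with the points \<open>p + t (u - p)\<close> of the segment and divide by \<open>t\<close>.\<close>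
  have "0 \<le> A + (xu - xp) + t * B" if t: "0 < t" "t < 1" for t
  proof -
    have "p + t *\<^sub>R d = (1 - t) *\<^sub>R p + t *\<^sub>R u"
      unfolding d_def by (simp add: algebra_simps)
    then have "X (p + t *\<^sub>R d) \<le> ereal (1 - t) * X p + ereal t * X u"
      using X(4) t unfolding convex_fn_def by simp
    also have "\<dots> = ereal ((1 - t) * xp + t * xu)"
      using xp xu by simp
    finally have "ereal (q (p + t *\<^sub>R d)) + X (p + t *\<^sub>R d)
        \<le> ereal (q (p + t *\<^sub>R d)) + ereal ((1 - t) * xp + t * xu)"
      by (rule add_left_mono)
    with prox_map_minimizes[OF X(1-3), of y x c "p + t *\<^sub>R d"]
    have "ereal (q p) + X p \<le> ereal (q (p + t *\<^sub>R d)) + ereal ((1 - t) * xp + t * xu)"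
      unfolding p_def[symmetric] q_def[symmetric] by (rule order_trans)
    then have "0 \<le> t * (A + (xu - xp) + t * B)"
      unfolding q_line xp by (simp add: algebra_simps power2_eq_square)
    with t show ?thesis by (simp add: zero_le_mult_iff)
  qed
  then have "0 \<le> A + (xu - xp)"
    by (rule nonneg_if_nonneg_add_small_multiple)
  moreover have "q u = q p + A + B"
    using q_line[of 1] unfolding d_def by simp
  ultimately show ?thesis
    using xu xp c unfolding q_def B_def d_def by (simp add: norm_minus_commute)
qed

lemma has_real_derivative_along_line:
  fixes F :: "'a::real_inner \<Rightarrow> real"
  assumes "\<And>x. (F has_derivative (\<lambda>v. inner (G x) v)) (at x)"
  shows "((\<lambda>t. F (x + t *\<^sub>R d)) has_real_derivative inner (G (x + t *\<^sub>R d)) d) (at t)"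
proof -
  have "((\<lambda>t. F (x + t *\<^sub>R d)) has_derivative (\<lambda>s. inner (G (x + t *\<^sub>R d)) (s *\<^sub>R d))) (at t)"
    by (rule has_derivative_compose[OF _ assms]) (auto intro!: derivative_eq_intros)
  then show ?thesis
    unfolding has_field_derivative_def by (rule has_derivative_eq_rhs) (simp add: fun_eq_iff)
qed

lemma lipschitz_gradient_upper_bound:
  fixes F :: "'a::real_inner \<Rightarrow> real"
  assumes D: "\<And>x. (F has_derivative (\<lambda>v. inner (G x) v)) (at x)"
    and Lip: "\<And>x y. norm (G x - G y) \<le> L * norm (x - y)"
  shows "F y \<le> F x + inner (G x) (y - x) + L / 2 * (norm (y - x))\<^sup>2"
proof -
  define d where "d = y - x"
  define \<phi> where "\<phi> t = F (x + t *\<^sub>R d) - t * inner (G x) d - L / 2 * t\<^sup>2 * (norm d)\<^sup>2" for t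
  have "\<phi> 1 \<le> \<phi> 0"
  proof (rule DERIV_nonpos_imp_nonincreasing[of 0 1 \<phi>])
    fix t :: real assume t: "0 \<le> t" "t \<le> 1"
    have "inner (G (x + t *\<^sub>R d)) d - inner (G x) d = inner (G (x + t *\<^sub>R d) - G x) d"
      by (simp add: inner_diff_left)
    also have "\<dots> \<le> norm (G (x + t *\<^sub>R d) - G x) * norm d"
      by (rule norm_cauchy_schwarz)
    also have "\<dots> \<le> L * norm (t *\<^sub>R d) * norm d"
      using Lip[of "x + t *\<^sub>R d" x] by (intro mult_right_mono) auto
    finally have "inner (G (x + t *\<^sub>R d)) d - inner (G x) d - L * t * (norm d)\<^sup>2 \<le> 0"
      using t by (simp add: power2_eq_square)
    moreover have "(\<phi> has_real_derivative
        inner (G (x + t *\<^sub>R d)) d - inner (G x) d - L * t * (norm d)\<^sup>2) (at t)"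
      unfolding \<phi>_def by (auto intro!: derivative_eq_intros has_real_derivative_along_line[OF D])
    ultimately show "\<exists>y. (\<phi> has_real_derivative y) (at t) \<and> y \<le> 0" by blast
  qed simp
  then show ?thesis unfolding \<phi>_def d_def by simp
qed

lemma lipschitz_gradient_lower_bound:
  fixes F :: "'a::real_inner \<Rightarrow> real"
  assumes "\<And>x. (F has_derivative (\<lambda>v. inner (G x) v)) (at x)"
    and "\<And>x y. norm (G x - G y) \<le> L * norm (x - y)"
  shows "F x + inner (G x) (y - x) \<le> F y + L / 2 * (norm (y - x))\<^sup>2"
proof -
  have "((\<lambda>x. - F x) has_derivative (\<lambda>v. inner (- G x) v)) (at x)" for x
    using has_derivative_minus[OF assms(1)] by simp
  moreover have "norm (- G x - - G y) \<le> L * norm (x - y)" for x y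
    using assms(2)[of y x] by (simp add: norm_minus_commute)
  ultimately show ?thesis
    using lipschitz_gradient_upper_bound[of "\<lambda>x. - F x" "\<lambda>x. - G x" L y x] by simp
qed

lemma convex_on_gradient_inequality:
  fixes F :: "'a::real_inner \<Rightarrow> real"
  assumes D: "\<And>x. (F has_derivative (\<lambda>v. inner (G x) v)) (at x)"
    and C: "convex_on UNIV F"
  shows "F x + inner (G x) (y - x) \<le> F y"
proof -
  define d where "d = y - x"
  have "convex_on UNIV (\<lambda>t::real. F (x + t *\<^sub>R d))"
  proof (rule convex_onI)
    fix t a b :: real assume "0 < t" "t < 1"
    moreover have "x + ((1 - t) * a + t * b) *\<^sub>R d = (1 - t) *\<^sub>R (x + a *\<^sub>R d) + t *\<^sub>R (x + b *\<^sub>R d)"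
      by (simp add: algebra_simps)
    ultimately show "F (x + ((1 - t) *\<^sub>R a + t *\<^sub>R b) *\<^sub>R d) \<le> (1 - t) * F (x + a *\<^sub>R d) + t * F (x + b *\<^sub>R d)"
      using convex_onD[OF C, of t "x + a *\<^sub>R d" "x + b *\<^sub>R d"] by simp
  qed simp
  then have "F (x + 1 *\<^sub>R d) - F (x + 0 *\<^sub>R d) \<ge> inner (G (x + 0 *\<^sub>R d)) d * (1 - 0)"
    using has_real_derivative_along_line[OF D, of x d 0]
    by (intro convex_on_imp_above_tangent) (auto intro: has_field_derivative_at_within)
  then show ?thesis unfolding d_def by simp
qed

lemma convex_fn_combination_le:
  fixes X :: "'a::real_vector \<Rightarrow> ereal"
  assumes X: "proper_fn X" "convex_fn X" and a: "X a \<noteq> \<infinity>" and b: "X b \<noteq> \<infinity>"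
    and t: "0 \<le> t" "t \<le> 1"
  defines "c \<equiv> (1 - t) *\<^sub>R a + t *\<^sub>R b"
  shows "X c \<noteq> \<infinity>"
    and "real_of_ereal (X c) \<le> (1 - t) * real_of_ereal (X a) + t * real_of_ereal (X b)"
proof -
  note finite = proper_fn_finite[OF X(1)]
  have "X c \<le> ereal ((1 - t) * real_of_ereal (X a) + t * real_of_ereal (X b))"
  proof (cases "t = 0 \<or> t = 1")
    case True
    then show ?thesis using finite[OF a] finite[OF b] unfolding c_def by auto
  next
    case False
    then have "X c \<le> ereal (1 - t) * X a + ereal t * X b"
      using X(2) t unfolding convex_fn_def c_def by simp
    also have "\<dots> = ereal ((1 - t) * real_of_ereal (X a) + t * real_of_ereal (X b))"
      using finite[OF a] finite[OF b] by (metis plus_ereal.simps(1) times_ereal.simps(1))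
    finally show ?thesis .
  qed
  then show "X c \<noteq> \<infinity>" and "real_of_ereal (X c) \<le> (1 - t) * real_of_ereal (X a) + t * real_of_ereal (X b)"
    using X(1) unfolding proper_fn_def by (cases "X c"; auto)+
qed

(* The reciprocal of the paper's \<Gamma>\<^sub>k = 2 / (k (k + 1)). *)
definition AG_weight :: "nat \<Rightarrow> real" where
  "AG_weight k = real k * (real k + 1) / 2"

lemma AG_weight_nonneg: "0 \<le> AG_weight k"
  unfolding AG_weight_def by simp

lemma AG_weight_mult_stepsize: "AG_weight k * (2 / (real k + 1)) = real k"
  unfolding AG_weight_def by (simp add: field_simps)

lemma AG_weight_mult_one_minus_stepsize:
  assumes "k \<ge> 1"
  shows "AG_weight k * (1 - 2 / (real k + 1)) = AG_weight (k - 1)"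
  using assms unfolding AG_weight_def by (simp add: of_nat_diff field_simps)

lemma AG_weight_pred_mult_stepsize_sq:
  assumes "k \<ge> 1"
  shows "AG_weight (k - 1) * (2 / (real k + 1))\<^sup>2 \<le> 2"
proof -
  have "AG_weight (k - 1) * (2 / (real k + 1))\<^sup>2 = 2 * (real k * (real k - 1)) / (real k + 1)\<^sup>2"
    using assms unfolding AG_weight_def by (simp add: of_nat_diff power_divide)
  also have "\<dots> \<le> 2 * (real k + 1)\<^sup>2 / (real k + 1)\<^sup>2"
    by (intro divide_right_mono) (auto simp: power2_eq_square algebra_simps)
  finally show ?thesis by simp
qed

lemma AG_stepsize_sq_le:
  fixes L :: real
  assumes "L \<ge> 0" "k \<ge> 1"
  shows "L * (2 / (real k + 1))\<^sup>2 \<le> 2 / (real k + 1) * (2 * L / real k)"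
proof -
  have "L * (2 / (real k + 1)) \<le> 2 * L / real k"
    using assms by (simp add: frac_le)
  then have "2 / (real k + 1) * (L * (2 / (real k + 1))) \<le> 2 / (real k + 1) * (2 * L / real k)"
    by (intro mult_left_mono) auto
  then show ?thesis
    by (simp add: power2_eq_square algebra_simps)
qed

lemma AG_error_bound:
  fixes a b :: real
  assumes "0 \<le> a" "0 \<le> b" "n \<ge> 1"
  shows "2 * ((a + b) * (AG_weight n + 1) + 4 * b * (real n - 1)) \<le> (a + 2 * b) * (real n + 1) * (real n + 2)"
proof -
  have "(a + 2 * b) * (real n + 1) * (real n + 2) - 2 * ((a + b) * (AG_weight n + 1) + 4 * b * (real n - 1))
      = 2 * real n * (a + b) + b * ((real n - 5 / 2)\<^sup>2 + 15 / 4)"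
    unfolding AG_weight_def by (simp add: algebra_simps power2_eq_square)
  moreover have "0 \<le> 2 * real n * (a + b) + b * ((real n - 5 / 2)\<^sup>2 + 15 / 4)"
    using assms by simp
  ultimately show ?thesis by linarith
qed

lemma AG_rate_bound:
  fixes L Lf d a b C n :: real
  assumes n: "n \<ge> 1" and L: "L > 0" "Lf \<ge> 0" and d: "d \<ge> 0"
    and C: "2 * C \<le> (a + 2 * b) * (n + 1) * (n + 2)"
  shows "8 * L * (2 * L * d + Lf * C)
      \<le> 24 * L * (4 * L * d / (n\<^sup>2 * (n + 1)) + Lf / n * (a + 2 * b)) * (n * (n + 1) * (n + 2) / 6)"
proof -
  have "24 * L * (4 * L * d / (n\<^sup>2 * (n + 1)) + Lf / n * (a + 2 * b)) * (n * (n + 1) * (n + 2) / 6)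
      = 16 * L\<^sup>2 * d * ((n + 2) / n) + 4 * L * Lf * ((a + 2 * b) * (n + 1) * (n + 2))"
    using n by (simp add: field_simps power2_eq_square add_nonneg_eq_0_iff)
  moreover have "16 * L\<^sup>2 * d * 1 \<le> 16 * L\<^sup>2 * d * ((n + 2) / n)"
    using n d by (intro mult_left_mono) auto
  moreover have "4 * L * Lf * (2 * C) \<le> 4 * L * Lf * ((a + 2 * b) * (n + 1) * (n + 2))"
    using C L by (intro mult_left_mono) auto
  ultimately show ?thesis
    by (simp add: algebra_simps power2_eq_square)
qed

lemma sum_AG_weight: "(\<Sum>j=1..n. AG_weight j) = real n * (real n + 1) * (real n + 2) / 6"
  by (induction n) (simp_all add: AG_weight_def field_simps)

locale composite_AG =
  fixes f h :: "'a::euclidean_space \<Rightarrow> real"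
    and gf gh :: "'a \<Rightarrow> 'a"
    and X :: "'a \<Rightarrow> ereal"
    and Lf Lh M :: real
    and xstar :: 'a
    and xs xmd xag :: "nat \<Rightarrow> 'a"
  assumes f_grad: "\<And>x. (f has_derivative (\<lambda>v. inner (gf x) v)) (at x)"
    and f_lip: "Lf \<ge> 0" "\<And>x y. norm (gf x - gf y) \<le> Lf * norm (x - y)"
    and h_grad: "\<And>x. (h has_derivative (\<lambda>v. inner (gh x) v)) (at x)"
    and h_convex: "convex_on UNIV h"
    and h_lip: "Lh \<ge> 0" "\<And>x y. norm (gh x - gh y) \<le> Lh * norm (x - y)"
    and L_pos: "Lf + Lh > 0"
    and X_proper: "proper_fn X" and X_closed: "closed_fn X" and X_convex: "convex_fn X"
    and X_bdd: "bounded (dom_fn X)"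
    and P_bdd: "\<And>x y c. c > 0 \<Longrightarrow> norm (prox_map X x y c) \<le> M"
    and md_step: "\<And>k. k \<ge> 1 \<Longrightarrow>
        xmd k = (1 - 2 / (real k + 1)) *\<^sub>R xag (k - 1) + (2 / (real k + 1)) *\<^sub>R xs (k - 1)"
    and x_step: "\<And>k. k \<ge> 1 \<Longrightarrow>
        xs k = prox_map X (xs (k - 1)) (gf (xmd k) + gh (xmd k)) (real k * (1 / (2 * (Lf + Lh))) / 2)"
    and ag_step: "\<And>k. k \<ge> 1 \<Longrightarrow>
        xag k = prox_map X (xmd k) (gf (xmd k) + gh (xmd k)) (1 / (2 * (Lf + Lh)))"
    and opt: "\<And>x. ereal (f xstar + h xstar) + X xstar \<le> ereal (f x + h x) + X x"
begin

abbreviation "L \<equiv> Lf + Lh"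
abbreviation "Psi u \<equiv> f u + h u"
abbreviation "gPsi u \<equiv> gf u + gh u"
(* real_of_ereal \<infinity> = 0: Xr is only meaningful on the domain of X. *)
abbreviation "Xr u \<equiv> real_of_ereal (X u)"
abbreviation "Phi u \<equiv> Psi u + Xr u"
abbreviation "gap k \<equiv> Phi (xag k) - Phi xstar"
abbreviation "D k \<equiv> (norm (xs k - xstar))\<^sup>2"

lemma Psi_upper: "Psi y \<le> Psi x + inner (gPsi x) (y - x) + L / 2 * (norm (y - x))\<^sup>2"
proof (rule lipschitz_gradient_upper_bound)
  show "(Psi has_derivative (\<lambda>v. inner (gPsi x) v)) (at x)" for x
    using has_derivative_add[OF f_grad h_grad] by (simp add: inner_add_left)
  show "norm (gPsi x - gPsi y) \<le> L * norm (x - y)" for x y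
  proof -
    have "norm (gPsi x - gPsi y) \<le> norm (gf x - gf y) + norm (gh x - gh y)"
      using norm_triangle_ineq[of "gf x - gf y" "gh x - gh y"] by (simp add: algebra_simps)
    also have "\<dots> \<le> Lf * norm (x - y) + Lh * norm (x - y)"
      using f_lip(2) h_lip(2) by (rule add_mono)
    finally show ?thesis by (simp add: algebra_simps)
  qed
qed

lemma Psi_lower: "Psi x + inner (gPsi x) (u - x) \<le> Psi u + Lf / 2 * (norm (u - x))\<^sup>2"
  using lipschitz_gradient_lower_bound[OF f_grad f_lip(2), of x u]
    convex_on_gradient_inequality[OF h_grad h_convex, of x u]
  by (simp add: inner_add_left)

lemmas X_finite = proper_fn_finite[OF X_proper]

lemma X_xstar: "X xstar \<noteq> \<infinity>"
proof -
  from X_proper obtain v where "X v \<noteq> \<infinity>" unfolding proper_fn_def by auto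
  then show ?thesis using opt[of v] X_finite by force
qed

lemma X_xs: "k \<ge> 1 \<Longrightarrow> X (xs k) \<noteq> \<infinity>"
  using x_step prox_map_in_dom[OF X_proper X_closed X_bdd] by metis

lemma X_xag: "k \<ge> 1 \<Longrightarrow> X (xag k) \<noteq> \<infinity>"
  using ag_step prox_map_in_dom[OF X_proper X_closed X_bdd] by metis

lemma norm_xs_le: "k \<ge> 1 \<Longrightarrow> norm (xs k) \<le> M"
  using x_step P_bdd L_pos by simp

lemma norm_xag_le: "k \<ge> 1 \<Longrightarrow> norm (xag k) \<le> M"
  using ag_step P_bdd L_pos by simp

lemma gap_nonneg: "k \<ge> 1 \<Longrightarrow> 0 \<le> gap k"
  using opt[of "xag k"] X_finite[OF X_xag] X_finite[OF X_xstar]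
  by (metis diff_ge_0_iff_ge ereal_less_eq(3) plus_ereal.simps(1))

lemma ereal_gap:
  assumes "k \<ge> 1"
  shows "(ereal (Psi (xag k)) + X (xag k)) - (ereal (Psi xstar) + X xstar) = ereal (gap k)"
proof -
  obtain a b where "X (xag k) = ereal a" "X xstar = ereal b"
    using X_finite[OF X_xag[OF assms]] X_finite[OF X_xstar] by blast
  then show ?thesis by simp
qed

lemma Phi_xag_le:
  assumes k: "k \<ge> 1" and u: "X u \<noteq> \<infinity>"
  shows "Phi (xag k) \<le> Psi (xmd k) + inner (gPsi (xmd k)) (u - xmd k) + Xr u
          + L * (norm (u - xmd k))\<^sup>2 - L / 2 * (norm (xag k - xmd k))\<^sup>2"
proof -
  have inv: "z / (2 * (1 / (2 * L))) = L * z" for z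
    using L_pos by (simp add: field_simps)
  have "0 < 1 / (2 * L)"
    using L_pos by simp
  from prox_map_three_point[OF X_proper X_closed X_bdd X_convex this u,
      where x = "xmd k" and y = "gPsi (xmd k)"]
  have "inner (gPsi (xmd k)) (xag k) + Xr (xag k) + L * (norm (xag k - xmd k))\<^sup>2
        + L * (norm (u - xag k))\<^sup>2 \<le> inner (gPsi (xmd k)) u + Xr u + L * (norm (u - xmd k))\<^sup>2"
    unfolding inv ag_step[OF k, symmetric] .
  moreover have "0 \<le> L * (norm (u - xag k))\<^sup>2"
    using L_pos by simp
  ultimately show ?thesis
    using Psi_upper[of "xag k" "xmd k"] by (simp add: inner_diff_right)
qed

lemma xs_three_point:
  assumes k: "k \<ge> 1"
  shows "inner (gPsi (xmd k)) (xs k) + Xr (xs k) + 2 * L / real k * (norm (xs k - xs (k - 1)))\<^sup>2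
          + 2 * L / real k * D k
        \<le> inner (gPsi (xmd k)) xstar + Xr xstar + 2 * L / real k * D (k - 1)"
proof -
  have inv: "z / (2 * (real k * (1 / (2 * L)) / 2)) = 2 * L / real k * z" for z
    using k L_pos by (simp add: field_simps)
  have "0 < real k * (1 / (2 * L)) / 2"
    using k L_pos by simp
  from prox_map_three_point[OF X_proper X_closed X_bdd X_convex this X_xstar,
      where x = "xs (k - 1)" and y = "gPsi (xmd k)"]
  show ?thesis
    unfolding inv x_step[OF k, symmetric] norm_minus_commute[of xstar] .
qed

lemma X_convex_step:
  assumes k: "k \<ge> 1"
  defines "\<alpha> \<equiv> 2 / (real k + 1)"
  shows "X ((1 - \<alpha>) *\<^sub>R xag (k - 1) + \<alpha> *\<^sub>R xs k) \<noteq> \<infinity>"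
    and "Xr ((1 - \<alpha>) *\<^sub>R xag (k - 1) + \<alpha> *\<^sub>R xs k) \<le> (1 - \<alpha>) * Xr (xag (k - 1)) + \<alpha> * Xr (xs k)"
proof -
  \<comment> \<open>For \<open>k = 1\<close> the point \<open>xag 0\<close> may lie outside the domain of \<open>X\<close>, but then \<open>\<alpha> = 1\<close>.\<close>
  have "X ((1 - \<alpha>) *\<^sub>R xag (k - 1) + \<alpha> *\<^sub>R xs k) \<noteq> \<infinity> \<and>
      Xr ((1 - \<alpha>) *\<^sub>R xag (k - 1) + \<alpha> *\<^sub>R xs k) \<le> (1 - \<alpha>) * Xr (xag (k - 1)) + \<alpha> * Xr (xs k)"
  proof (cases "k = 1")
    case True
    then have "\<alpha> = 1" unfolding \<alpha>_def by simp
    then show ?thesis using X_xs[OF k] by simp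
  next
    case False
    then have "k - 1 \<ge> 1" "0 \<le> \<alpha>" "\<alpha> \<le> 1"
      using k unfolding \<alpha>_def by auto
    then show ?thesis
      using convex_fn_combination_le[OF X_proper X_convex X_xag X_xs[OF k]] by blast
  qed
  then show "X ((1 - \<alpha>) *\<^sub>R xag (k - 1) + \<alpha> *\<^sub>R xs k) \<noteq> \<infinity>"
    and "Xr ((1 - \<alpha>) *\<^sub>R xag (k - 1) + \<alpha> *\<^sub>R xs k) \<le> (1 - \<alpha>) * Xr (xag (k - 1)) + \<alpha> * Xr (xs k)"
    by auto
qed

lemma one_step:
  assumes k: "k \<ge> 1"
  defines "\<alpha> \<equiv> 2 / (real k + 1)" and "r \<equiv> 2 * L / real k"
  shows "gap k \<le> (1 - \<alpha>) * gap (k - 1) + (1 - \<alpha>) * (Lf / 2 * (norm (xag (k - 1) - xmd k))\<^sup>2)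
      + \<alpha> * (Lf / 2 * (norm (xstar - xmd k))\<^sup>2) + \<alpha> * r * (D (k - 1) - D k)
      - (\<alpha> * r - L * \<alpha>\<^sup>2) * (norm (xs k - xs (k - 1)))\<^sup>2 - L / 2 * (norm (xag k - xmd k))\<^sup>2"
proof -
  define md where "md = xmd k"
  define g where "g = gPsi md"
  define Dl where "Dl = (norm (xs k - xs (k - 1)))\<^sup>2"
  define xbar where "xbar = (1 - \<alpha>) *\<^sub>R xag (k - 1) + \<alpha> *\<^sub>R xs k"
  have \<alpha>: "0 \<le> \<alpha>" "\<alpha> \<le> 1"
    using k unfolding \<alpha>_def by auto
  have md_eq: "md = (1 - \<alpha>) *\<^sub>R xag (k - 1) + \<alpha> *\<^sub>R xs (k - 1)"
    unfolding md_def \<alpha>_def by (rule md_step[OF k])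
  have xbar: "X xbar \<noteq> \<infinity>" "Xr xbar \<le> (1 - \<alpha>) * Xr (xag (k - 1)) + \<alpha> * Xr (xs k)"
    unfolding xbar_def \<alpha>_def by (rule X_convex_step[OF k])+
  have "xbar - md = \<alpha> *\<^sub>R (xs k - xs (k - 1))"
    unfolding xbar_def md_eq by (simp add: algebra_simps)
  then have nbar: "L * (norm (xbar - md))\<^sup>2 = L * \<alpha>\<^sup>2 * Dl"
    unfolding Dl_def using \<alpha> by (simp add: power_mult_distrib)
  have "xbar - md = (1 - \<alpha>) *\<^sub>R (xag (k - 1) - md) + \<alpha> *\<^sub>R (xs k - md)"
    unfolding xbar_def by (simp add: algebra_simps)
  then have ibar: "inner g (xbar - md) = (1 - \<alpha>) * inner g (xag (k - 1) - md) + \<alpha> * inner g (xs k - md)"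
    by (simp add: inner_add_right)
  have xag_prev_bound: "Psi md + inner g (xag (k - 1) - md) + Xr (xag (k - 1))
      \<le> Phi (xag (k - 1)) + Lf / 2 * (norm (xag (k - 1) - md))\<^sup>2"
    using Psi_lower[of md "xag (k - 1)"] unfolding g_def by simp
  have xs_bound: "Psi md + inner g (xs k - md) + Xr (xs k)
      \<le> Phi xstar + Lf / 2 * (norm (xstar - md))\<^sup>2 + r * (D (k - 1) - D k) - r * Dl"
    using xs_three_point[OF k] Psi_lower[of md xstar]
    unfolding g_def md_def r_def Dl_def by (simp add: inner_diff_right right_diff_distrib)
  have "(1 - \<alpha>) * (Psi md + inner g (xag (k - 1) - md) + Xr (xag (k - 1)))
      + \<alpha> * (Psi md + inner g (xs k - md) + Xr (xs k))
      = Psi md + ((1 - \<alpha>) * inner g (xag (k - 1) - md) + \<alpha> * inner g (xs k - md))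
      + ((1 - \<alpha>) * Xr (xag (k - 1)) + \<alpha> * Xr (xs k))"
    by (simp add: algebra_simps)
  then have "Phi (xag k) \<le> (1 - \<alpha>) * (Psi md + inner g (xag (k - 1) - md) + Xr (xag (k - 1)))
      + \<alpha> * (Psi md + inner g (xs k - md) + Xr (xs k)) + L * \<alpha>\<^sup>2 * Dl - L / 2 * (norm (xag k - md))\<^sup>2"
    using Phi_xag_le[OF k xbar(1)] xbar(2) nbar ibar unfolding md_def[symmetric] g_def[symmetric]
    by linarith
  also have "\<dots> \<le> (1 - \<alpha>) * (Phi (xag (k - 1)) + Lf / 2 * (norm (xag (k - 1) - md))\<^sup>2)
      + \<alpha> * (Phi xstar + Lf / 2 * (norm (xstar - md))\<^sup>2 + r * (D (k - 1) - D k) - r * Dl)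
      + L * \<alpha>\<^sup>2 * Dl - L / 2 * (norm (xag k - md))\<^sup>2"
    using mult_left_mono[OF xag_prev_bound, of "1 - \<alpha>"] mult_left_mono[OF xs_bound, of \<alpha>] \<alpha> by simp
  finally show ?thesis
    unfolding md_def Dl_def by (simp add: algebra_simps)
qed

abbreviation "grad_sq k \<equiv> (norm (grad_map X (xmd k) (gPsi (xmd k)) (1 / (2 * L))))\<^sup>2"

lemma grad_sq_eq:
  assumes "k \<ge> 1"
  shows "grad_sq k / (8 * L) = L / 2 * (norm (xag k - xmd k))\<^sup>2"
proof -
  \<comment> \<open>Naming the sum \<open>Lf + Lh\<close> keeps the simplifier from distributing over it.\<close>
  define l where "l = L"
  have l: "l > 0"
    using L_pos unfolding l_def .
  have "grad_map X (xmd k) (gPsi (xmd k)) (1 / (2 * l)) = (2 * l) *\<^sub>R (xmd k - xag k)"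
    unfolding grad_map_def l_def ag_step[OF assms, symmetric] by simp
  then show ?thesis
    unfolding l_def[symmetric] using l
    by (simp add: norm_minus_commute power_mult_distrib power2_eq_square)
qed

lemma norm_xmd_le:
  assumes k: "k \<ge> 2"
  shows "norm (xmd k) \<le> M"
proof -
  define \<alpha> where "\<alpha> = 2 / (real k + 1)"
  have \<alpha>: "0 \<le> \<alpha>" "\<alpha> \<le> 1"
    using k unfolding \<alpha>_def by auto
  have "norm (xmd k) \<le> (1 - \<alpha>) * norm (xag (k - 1)) + \<alpha> * norm (xs (k - 1))"
    using md_step[of k] k norm_triangle_ineq[of "(1 - \<alpha>) *\<^sub>R xag (k - 1)" "\<alpha> *\<^sub>R xs (k - 1)"] \<alpha>
    unfolding \<alpha>_def by simp
  also have "\<dots> \<le> (1 - \<alpha>) * M + \<alpha> * M"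
    using \<alpha> norm_xag_le norm_xs_le k by (intro add_mono mult_left_mono) auto
  finally show ?thesis by (simp add: algebra_simps)
qed

lemma weighted_first_step:
  "gap 1 + grad_sq 1 / (8 * L) + 2 * L * D 1 \<le> 2 * L * D 0 + 2 * Lf * ((norm xstar)\<^sup>2 + M\<^sup>2)"
proof -
  \<comment> \<open>\<open>xmd 1 = xs 0\<close> is not bounded by \<open>M\<close>; the surplus \<open>L \<parallel>xs 1 - xs 0\<parallel>\<^sup>2\<close> absorbs it.\<close>
  define Dl where "Dl = (norm (xs 1 - xs 0))\<^sup>2"
  define ns where "ns = (norm (xstar - xmd 1))\<^sup>2"
  have "gap 1 \<le> Lf / 2 * ns + 2 * L * (D 0 - D 1) - L * Dl - L / 2 * (norm (xag 1 - xmd 1))\<^sup>2"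
    using one_step[of 1] unfolding Dl_def ns_def by (simp add: algebra_simps)
  moreover have "ns \<le> 4 * ((norm xstar)\<^sup>2 + M\<^sup>2) + 2 * Dl"
  proof -
    have "ns \<le> 2 * (norm (xstar - xs 1))\<^sup>2 + 2 * Dl"
      using norm_add_power2_le[of "xstar - xs 1" "xs 1 - xs 0"] md_step[of 1] unfolding ns_def Dl_def by simp
    moreover have "(norm (xstar - xs 1))\<^sup>2 \<le> 2 * (norm xstar)\<^sup>2 + 2 * (norm (xs 1))\<^sup>2"
      using norm_add_power2_le[of xstar "- xs 1"] by simp
    moreover have "(norm (xs 1))\<^sup>2 \<le> M\<^sup>2"
      using power_mono[OF norm_xs_le[of 1] norm_ge_zero, of 2] by simp
    ultimately show ?thesis by simp
  qed
  then have "Lf / 2 * ns \<le> Lf / 2 * (4 * ((norm xstar)\<^sup>2 + M\<^sup>2) + 2 * Dl)"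
    using f_lip(1) by (intro mult_left_mono) auto
  then have "Lf / 2 * ns \<le> 2 * Lf * ((norm xstar)\<^sup>2 + M\<^sup>2) + Lf * Dl"
    by (simp add: algebra_simps)
  moreover have "Lf * Dl \<le> L * Dl"
    unfolding Dl_def using h_lip(1) by (intro mult_right_mono) auto
  ultimately show ?thesis
    unfolding grad_sq_eq[OF order_refl] by (simp add: right_diff_distrib)
qed

lemma dist_xstar_xmd_le:
  assumes "k \<ge> 2"
  shows "(norm (xstar - xmd k))\<^sup>2 \<le> 2 * ((norm xstar)\<^sup>2 + M\<^sup>2)"
proof -
  have "(norm (xstar - xmd k))\<^sup>2 \<le> 2 * (norm xstar)\<^sup>2 + 2 * (norm (xmd k))\<^sup>2"
    using norm_add_power2_le[of xstar "- xmd k"] by simp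
  also have "\<dots> \<le> 2 * (norm xstar)\<^sup>2 + 2 * M\<^sup>2"
    using power_mono[OF norm_xmd_le[OF assms] norm_ge_zero, of 2] by simp
  finally show ?thesis by simp
qed

lemma weighted_dist_xag_xmd_le:
  assumes k: "k \<ge> 2"
  shows "AG_weight (k - 1) * (norm (xag (k - 1) - xmd k))\<^sup>2 \<le> 8 * M\<^sup>2"
proof -
  define \<alpha> where "\<alpha> = 2 / (real k + 1)"
  have k1: "k \<ge> 1" "k - 1 \<ge> 1"
    using k by auto
  have "xag (k - 1) - xmd k = \<alpha> *\<^sub>R (xag (k - 1) - xs (k - 1))"
    using md_step[OF k1(1)] unfolding \<alpha>_def by (simp add: algebra_simps)
  then have dist_eq: "(norm (xag (k - 1) - xmd k))\<^sup>2 = \<alpha>\<^sup>2 * (norm (xag (k - 1) - xs (k - 1)))\<^sup>2"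
    by (simp add: power_mult_distrib)
  have "norm (xag (k - 1) - xs (k - 1)) \<le> 2 * M"
    using norm_triangle_ineq4[of "xag (k - 1)" "xs (k - 1)"] norm_xag_le[OF k1(2)] norm_xs_le[OF k1(2)]
    by simp
  then have "(norm (xag (k - 1) - xs (k - 1)))\<^sup>2 \<le> 4 * M\<^sup>2"
    using power_mono[of _ "2 * M" 2] by (simp add: power_mult_distrib)
  then have "AG_weight (k - 1) * (norm (xag (k - 1) - xmd k))\<^sup>2 \<le> (AG_weight (k - 1) * \<alpha>\<^sup>2) * (4 * M\<^sup>2)"
    unfolding dist_eq mult.assoc using AG_weight_nonneg by (intro mult_left_mono) auto
  also have "\<dots> \<le> 2 * (4 * M\<^sup>2)"
    using AG_weight_pred_mult_stepsize_sq[OF k1(1)] unfolding \<alpha>_def by (intro mult_right_mono) auto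
  finally show ?thesis by simp
qed

lemma weighted_step:
  assumes k: "k \<ge> 2"
  shows "AG_weight k * gap k + AG_weight k * (grad_sq k / (8 * L)) + 2 * L * D k
      \<le> AG_weight (k - 1) * gap (k - 1) + 2 * L * D (k - 1)
        + Lf * (4 * M\<^sup>2 + real k * ((norm xstar)\<^sup>2 + M\<^sup>2))"
proof -
  have k1: "k \<ge> 1"
    using k by simp
  define \<alpha> where "\<alpha> = 2 / (real k + 1)"
  define r where "r = 2 * L / real k"
  define w where "w = AG_weight k"
  define n1 where "n1 = (norm (xag (k - 1) - xmd k))\<^sup>2"
  define ns where "ns = (norm (xstar - xmd k))\<^sup>2"
  define Dl where "Dl = (norm (xs k - xs (k - 1)))\<^sup>2"
  have w1: "w * (1 - \<alpha>) = AG_weight (k - 1)"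
    unfolding w_def \<alpha>_def by (rule AG_weight_mult_one_minus_stepsize[OF k1])
  have w2: "w * \<alpha> = real k"
    unfolding w_def \<alpha>_def by (rule AG_weight_mult_stepsize)
  have w3: "w * \<alpha> * r = 2 * L"
    unfolding w2 r_def using k by simp
  have "w * gap k \<le> w * ((1 - \<alpha>) * gap (k - 1) + (1 - \<alpha>) * (Lf / 2 * n1) + \<alpha> * (Lf / 2 * ns)
      + \<alpha> * r * (D (k - 1) - D k) - (\<alpha> * r - L * \<alpha>\<^sup>2) * Dl - L / 2 * (norm (xag k - xmd k))\<^sup>2)"
    using one_step[OF k1] AG_weight_nonneg
    unfolding w_def \<alpha>_def r_def n1_def ns_def Dl_def by (rule mult_left_mono)
  also have "\<dots> = AG_weight (k - 1) * gap (k - 1) + AG_weight (k - 1) * (Lf / 2 * n1)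
      + real k * (Lf / 2 * ns) + 2 * L * (D (k - 1) - D k) - w * (\<alpha> * r - L * \<alpha>\<^sup>2) * Dl
      - w * (L / 2 * (norm (xag k - xmd k))\<^sup>2)"
    unfolding w1[symmetric] w2[symmetric] w3[symmetric] by (simp add: algebra_simps)
  finally have weighted: "w * gap k \<le> AG_weight (k - 1) * gap (k - 1) + AG_weight (k - 1) * (Lf / 2 * n1)
      + real k * (Lf / 2 * ns) + 2 * L * (D (k - 1) - D k) - w * (\<alpha> * r - L * \<alpha>\<^sup>2) * Dl
      - w * (L / 2 * (norm (xag k - xmd k))\<^sup>2)" .
  have "AG_weight (k - 1) * (Lf / 2 * n1) \<le> Lf / 2 * (8 * M\<^sup>2)"
    unfolding n1_def mult.left_commute[of "AG_weight (k - 1)"]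
    using weighted_dist_xag_xmd_le[OF k] f_lip(1) by (intro mult_left_mono) auto
  moreover have "real k * (Lf / 2 * ns) \<le> real k * (Lf / 2 * (2 * ((norm xstar)\<^sup>2 + M\<^sup>2)))"
    unfolding ns_def using dist_xstar_xmd_le[OF k] f_lip(1) by (intro mult_left_mono) auto
  moreover have "0 \<le> w * (\<alpha> * r - L * \<alpha>\<^sup>2) * Dl"
  proof -
    have "L * \<alpha>\<^sup>2 \<le> \<alpha> * r"
      unfolding \<alpha>_def r_def using L_pos by (intro AG_stepsize_sq_le k1) simp
    then show ?thesis
      unfolding w_def Dl_def using AG_weight_nonneg by (intro mult_nonneg_nonneg) auto
  qed
  ultimately show ?thesis
    using weighted right_diff_distrib[of "2 * L" "D (k - 1)" "D k"]
    unfolding grad_sq_eq[OF k1] w_def by (simp add: algebra_simps)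
qed

lemma weighted_sum_bound:
  assumes "n \<ge> 1"
  shows "AG_weight n * gap n + (\<Sum>j=1..n. AG_weight j * (grad_sq j / (8 * L))) + 2 * L * D n
      \<le> 2 * L * D 0 + Lf * (((norm xstar)\<^sup>2 + M\<^sup>2) * (AG_weight n + 1) + 4 * M\<^sup>2 * (real n - 1))"
  using assms
proof (induction n rule: nat_induct_at_least)
  case base
  then show ?case
    using weighted_first_step by (simp add: AG_weight_def algebra_simps)
next
  case (Suc n)
  have "Lf * (((norm xstar)\<^sup>2 + M\<^sup>2) * (AG_weight (Suc n) + 1) + 4 * M\<^sup>2 * (real (Suc n) - 1))
      = Lf * (((norm xstar)\<^sup>2 + M\<^sup>2) * (AG_weight n + 1) + 4 * M\<^sup>2 * (real n - 1))
        + Lf * (4 * M\<^sup>2 + real (Suc n) * ((norm xstar)\<^sup>2 + M\<^sup>2))"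
    unfolding AG_weight_def by (simp add: algebra_simps)
  moreover have "(\<Sum>j=1..Suc n. AG_weight j * (grad_sq j / (8 * L)))
      = (\<Sum>j=1..n. AG_weight j * (grad_sq j / (8 * L))) + AG_weight (Suc n) * (grad_sq (Suc n) / (8 * L))"
    by simp
  ultimately show ?case
    using Suc.IH weighted_step[of "Suc n"] Suc.hyps by simp
qed

lemma min_grad_sq_le:
  assumes N: "N \<ge> 1"
  shows "(MIN k\<in>{1..N}. grad_sq k)
      \<le> 24 * L * (4 * L * D 0 / (real N ^ 2 * (real N + 1)) + Lf / real N * ((norm xstar)\<^sup>2 + 2 * M\<^sup>2))"
    (is "?m \<le> ?R")
proof -
  define n where "n = real N"
  define a where "a = (norm xstar)\<^sup>2"
  define C where "C = (a + M\<^sup>2) * (AG_weight N + 1) + 4 * M\<^sup>2 * (n - 1)"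
  define P where "P = n * (n + 1) * (n + 2) / 6"
  have n: "n \<ge> 1"
    using N unfolding n_def by simp
  have "?m * P = (\<Sum>j=1..N. ?m * AG_weight j)"
    unfolding P_def n_def sum_AG_weight[symmetric] by (simp add: sum_distrib_left)
  also have "\<dots> \<le> (\<Sum>j=1..N. AG_weight j * grad_sq j)"
  proof (rule sum_mono)
    fix j assume "j \<in> {1..N}"
    then have "?m \<le> grad_sq j"
      by (intro Min_le) auto
    then show "?m * AG_weight j \<le> AG_weight j * grad_sq j"
      by (subst mult.commute) (rule mult_left_mono[OF _ AG_weight_nonneg])
  qed
  also have "\<dots> \<le> 8 * L * (2 * L * D 0 + Lf * C)"
  proof -
    have "0 \<le> AG_weight N * gap N"
      using AG_weight_nonneg gap_nonneg[OF N] by simp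
    moreover have "0 \<le> 2 * L * D N"
      using L_pos by simp
    ultimately have "(\<Sum>j=1..N. AG_weight j * grad_sq j) / (8 * L) \<le> 2 * L * D 0 + Lf * C"
      using weighted_sum_bound[OF N] unfolding C_def a_def n_def
      by (simp add: sum_divide_distrib)
    then show ?thesis
      using L_pos by (simp add: divide_le_eq mult.commute)
  qed
  also have "\<dots> \<le> ?R * P"
    using AG_rate_bound[OF n L_pos f_lip(1)] AG_error_bound[OF _ _ N]
    unfolding P_def C_def n_def a_def by simp
  finally show ?thesis
    unfolding P_def using n by (simp add: mult_le_cancel_right)
qed

lemma gap_le:
  assumes N: "N \<ge> 1" and Lf: "Lf = 0"
  shows "gap N \<le> 4 * L * D 0 / (real N * (real N + 1))"
proof -
  define g where "g = gap N"
  have "0 \<le> (\<Sum>j=1..N. AG_weight j * (grad_sq j / (8 * L)))"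
    using L_pos by (intro sum_nonneg mult_nonneg_nonneg AG_weight_nonneg) auto
  moreover have "0 \<le> 2 * L * D N"
    using L_pos by simp
  ultimately have "AG_weight N * g \<le> 2 * L * D 0"
    using weighted_sum_bound[OF N] Lf unfolding g_def by simp
  then have "g * (real N * (real N + 1)) \<le> 4 * L * D 0"
    unfolding AG_weight_def by (simp add: field_simps)
  then show ?thesis
    unfolding g_def using N by (simp add: pos_le_divide_eq)
qed

end

theorem corollary2:
  fixes f h :: "'a::euclidean_space \<Rightarrow> real"
    and gf gh :: "'a \<Rightarrow> 'a"
    and X :: "'a \<Rightarrow> ereal"
    and Lf Lh M :: real
    and x0 xstar :: 'a
    and xs xmd xag :: "nat \<Rightarrow> 'a"
    and N :: nat
  assumes f_grad: "\<And>x. (f has_derivative (\<lambda>v. inner (gf x) v)) (at x)"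
    and f_lip: "Lf \<ge> 0" "\<And>x y. norm (gf x - gf y) \<le> Lf * norm (x - y)"
    and h_grad: "\<And>x. (h has_derivative (\<lambda>v. inner (gh x) v)) (at x)"
    and h_convex: "convex_on UNIV h"
    and h_lip: "Lh \<ge> 0" "\<And>x y. norm (gh x - gh y) \<le> Lh * norm (x - y)"
    and L_pos: "Lf + Lh > 0"
    and X_proper: "proper_fn X" and X_closed: "closed_fn X" and X_convex: "convex_fn X"
    and X_bdd: "bounded (dom_fn X)"
    and P_bdd: "\<And>x y c. c > 0 \<Longrightarrow> norm (prox_map X x y c) \<le> M"
    and init: "xs 0 = x0" "xag 0 = x0"
    and md_step: "\<And>k. k \<ge> 1 \<Longrightarrow>
        xmd k = (1 - 2 / (real k + 1)) *\<^sub>R xag (k - 1) + (2 / (real k + 1)) *\<^sub>R xs (k - 1)"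
    and x_step: "\<And>k. k \<ge> 1 \<Longrightarrow>
        xs k = prox_map X (xs (k - 1)) (gf (xmd k) + gh (xmd k)) (real k * (1 / (2 * (Lf + Lh))) / 2)"
    and ag_step: "\<And>k. k \<ge> 1 \<Longrightarrow>
        xag k = prox_map X (xmd k) (gf (xmd k) + gh (xmd k)) (1 / (2 * (Lf + Lh)))"
    and opt: "\<And>x. ereal (f xstar + h xstar) + X xstar \<le> ereal (f x + h x) + X x"
    and N: "N \<ge> 1"
  shows "((MIN k\<in>{1..N}. (norm (grad_map X (xmd k) (gf (xmd k) + gh (xmd k)) (1 / (2 * (Lf + Lh)))))\<^sup>2)
           \<le> 24 * (Lf + Lh) * (4 * (Lf + Lh) * (norm (x0 - xstar))\<^sup>2 / (real N ^ 2 * (real N + 1))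
                + Lf / real N * ((norm xstar)\<^sup>2 + 2 * M\<^sup>2)))
         \<and> (Lf = 0 \<longrightarrow>
         (ereal (f (xag N) + h (xag N)) + X (xag N)) - (ereal (f xstar + h xstar) + X xstar)
           \<le> ereal (4 * (Lf + Lh) * (norm (x0 - xstar))\<^sup>2 / (real N * (real N + 1))))"
proof -
  interpret composite_AG f h gf gh X Lf Lh M xstar xs xmd xag
    by unfold_locales (fact assms)+
  show ?thesis
    using min_grad_sq_le[OF N] gap_le[OF N] ereal_gap[OF N] init(1) by simp
qed

end
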